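(* Let $p\ge1$, $m\in\mathbb N$, $Q\in\mathcal K_o^{1,m}$, $T\in GL_n(\mathbb R)$, and let $L\subset M_{n,m}$ be compact with positive volume. Then $\Gamma_{Q,p}(T.L)=T.\Gamma_{Q,p}L$.
   Context: $M_{k,l}$: real $k\times l$ matrices with inner product $\langle A,B\rangle=\mathrm{tr}(A^t.B)$, identified with $\mathbb R^{kl}$; $A.B$ is matrix product and $T.L=\{T.x:x\in L\}$; $\mathbb R^n\cong M_{n,1}$, $\mathbb R^m\cong M_{1,m}$. $\mathcal K_o^{1,m}$ = convex bodies in $M_{1,m}$ containing the origin. $h_G(x)=\sup_{y\in G}\langle y,x\rangle$. For compact $L\subset M_{n,m}$ of positive volume, $\Gamma_{Q,p}L$ is the convex body in $M_{n,1}$ with $h_{\Gamma_{Q,p}L}(v)^p=\frac1{\mathrm{vol}_{nm}(L)}\int_Lh_Q(v^t.x)^pdx$. *)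

theory Defs
  imports "HOL-Analysis.Analysis"
begin

text \<open>Matrices in M_{n,m} are rendered as real^'m^'n (n rows indexed by 'n, m columns
indexed by 'm); the Euclidean inner product on this type is tr(A^t B).
M_{n,1} is identified with real^'n and M_{1,m} with real^'m.
For v in R^n and x in M_{n,m}, the row vector v^t.x is  v v* x.\<close>

definition support_fun :: "'a::real_inner set \<Rightarrow> 'a \<Rightarrow> real" where
  "support_fun G x = (SUP y\<in>G. inner y x)"

definition convex_body :: "'a::euclidean_space set \<Rightarrow> bool" where
  "convex_body K \<longleftrightarrow> compact K \<and> convex K \<and> interior K \<noteq> {}"

definition Gamma_supp :: "(real^'m) set \<Rightarrow> real \<Rightarrow> (real^'m^'n) set \<Rightarrow> real^'n \<Rightarrow> real" where
  "Gamma_supp Q p L v =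
     ((1 / measure lebesgue L) * integral L (\<lambda>x. (support_fun Q (v v* x)) powr p)) powr (1 / p)"

definition Gamma :: "(real^'m) set \<Rightarrow> real \<Rightarrow> (real^'m^'n) set \<Rightarrow> (real^'n) set" where
  "Gamma Q p L = {y. \<forall>v. inner y v \<le> Gamma_supp Q p L v}"

end

theory Submission
  imports Defs
begin

text \<open>Substituting x = T.y turns v^t.x into (T^t v)^t.y, and the Jacobian of x \<mapsto> T.x on
M_{n,m} cancels between the integral and vol(T.L). Hence h_{\<Gamma>(T.L)}(v) = h_{\<Gamma>L}(T^t v), and the
intersection of the half-spaces <y,v> \<le> h(T^t v) is the T-image of the intersection of the
half-spaces <z,w> \<le> h(w).\<close>

text \<open>HOL-Analysis proves change of variables only on real^'k with 'k a well-order. A linear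
bijection that is isometric and permutes the standard basis transports integrals from any
Euclidean space to such a space.\<close>


locale coordinate_permutation =
  fixes \<phi> :: "'a::euclidean_space \<Rightarrow> 'b::euclidean_space" and \<psi> :: "'b \<Rightarrow> 'a"
  assumes linear: "linear \<phi>"
    and left_inverse: "\<And>x. \<psi> (\<phi> x) = x" and right_inverse: "\<And>y. \<phi> (\<psi> y) = y"
    and inner: "\<And>x y. \<phi> x \<bullet> \<phi> y = x \<bullet> y"
    and Basis: "\<phi> ` Basis = Basis"
begin

lemma linear_inverse: "linear \<psi>"
proof (rule linearI)
  show "\<psi> (x + y) = \<psi> x + \<psi> y" for x y
  proof -
    have "\<psi> (x + y) = \<psi> (\<phi> (\<psi> x) + \<phi> (\<psi> y))" by (simp only: right_inverse)
    also have "\<dots> = \<psi> x + \<psi> y" by (simp only: linear_add[OF linear, symmetric] left_inverse)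
    finally show ?thesis .
  qed
  show "\<psi> (c *\<^sub>R x) = c *\<^sub>R \<psi> x" for c x
  proof -
    have "\<psi> (c *\<^sub>R x) = \<psi> (c *\<^sub>R \<phi> (\<psi> x))" by (simp only: right_inverse)
    also have "\<dots> = c *\<^sub>R \<psi> x" by (simp only: linear_scale[OF linear, symmetric] left_inverse)
    finally show ?thesis .
  qed
qed

lemma coordinate_permutation_inverse: "coordinate_permutation \<psi> \<phi>"
proof (intro coordinate_permutation.intro linear_inverse)
  show "\<psi> x \<bullet> \<psi> y = x \<bullet> y" for x y
    by (metis inner right_inverse)
  have "\<psi> ` Basis = \<psi> ` \<phi> ` Basis" by (simp only: Basis)
  then show "\<psi> ` Basis = Basis" by (simp add: image_comp left_inverse)
qed (simp_all add: linear_inverse left_inverse right_inverse)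

lemma inner_image_right: "x \<bullet> \<phi> b = \<psi> x \<bullet> b"
  by (metis inner right_inverse)

lemma image_cbox: "\<phi> ` cbox u v = cbox (\<phi> u) (\<phi> v)"
proof -
  have "x \<in> cbox (\<phi> u) (\<phi> v) \<longleftrightarrow> \<psi> x \<in> cbox u v" for x
    unfolding mem_box Basis[symmetric] by (simp add: inner_image_right left_inverse)
  then show ?thesis
    using left_inverse right_inverse by (auto intro!: image_eqI)
qed

lemma measure_image_cbox: "measure lborel (\<phi> ` cbox u v) = measure lborel (cbox u v)"
proof -
  have "inj_on \<phi> Basis" by (metis inj_on_inverseI left_inverse)
  then have "(\<Prod>b\<in>Basis. \<phi> v \<bullet> b - \<phi> u \<bullet> b) = (\<Prod>b\<in>Basis. \<phi> v \<bullet> \<phi> b - \<phi> u \<bullet> \<phi> b)"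
    by (metis (no_types, lifting) Basis prod.reindex_cong)
  also have "\<dots> = (\<Prod>b\<in>Basis. v \<bullet> b - u \<bullet> b)" by (simp add: inner)
  moreover have "cbox (\<phi> u) (\<phi> v) = {} \<longleftrightarrow> cbox u v = {}"
    by (metis image_cbox image_is_empty)
  ultimately show ?thesis
    by (simp add: image_cbox content_cbox_if)
qed

lemma has_integral_image:
  fixes f :: "'a \<Rightarrow> 'c::banach"
  assumes "bounded S" and "(f has_integral I) S"
  shows "((f \<circ> \<psi>) has_integral I) (\<phi> ` S)"
proof -
  interpret inverse: coordinate_permutation \<psi> \<phi>
    by (rule coordinate_permutation_inverse)
  obtain a b where S: "S \<subseteq> cbox a b"
    using assms(1) bounded_subset_cbox_symmetric by metis
  let ?g = "\<lambda>x. if x \<in> S then f x else 0"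
  have "((\<lambda>y. ?g (\<psi> y)) has_integral (1 / 1) *\<^sub>R I) (\<phi> ` cbox a b)"
  proof (rule has_integral_twiddle[where g = \<psi> and h = \<phi> and r = 1])
    show "continuous (at y) \<psi>" for y
      by (simp add: inverse.linear linear_continuous_at linear_linear)
    show "\<exists>w z. \<psi> ` cbox u v = cbox w z" for u v
      using inverse.image_cbox by blast
    show "\<exists>w z. \<phi> ` cbox u v = cbox w z" for u v
      using image_cbox by blast
    show "measure lborel (\<psi> ` cbox u v) = 1 * measure lborel (cbox u v)" for u v
      by (simp add: inverse.measure_image_cbox)
    show "(?g has_integral I) (cbox a b)"
      using S assms(2) by (simp only: has_integral_restrict)
  qed (simp_all add: left_inverse right_inverse)
  moreover have "\<psi> y \<in> S \<longleftrightarrow> y \<in> \<phi> ` S" for y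
    by (metis image_iff left_inverse right_inverse)
  moreover have "\<phi> ` S \<subseteq> \<phi> ` cbox a b"
    using S by blast
  ultimately show ?thesis
    using has_integral_restrict[of "\<phi> ` S" "\<phi> ` cbox a b" "f \<circ> \<psi>" I] by (simp add: o_def)
qed

lemma integral_image:
  fixes f :: "'a \<Rightarrow> 'c::banach"
  assumes "bounded S"
  shows "integral (\<phi> ` S) (f \<circ> \<psi>) = integral S f"
proof -
  interpret inverse: coordinate_permutation \<psi> \<phi>
    by (rule coordinate_permutation_inverse)
  have "bounded (\<phi> ` S)"
    using assms linear bounded_linear_image linear_linear by blast
  then have "((f \<circ> \<psi>) has_integral I) (\<phi> ` S) \<Longrightarrow> (f has_integral I) S" for I
    using inverse.has_integral_image[of "\<phi> ` S" "f \<circ> \<psi>" I]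
    by (simp add: image_comp o_def left_inverse)
  then have "(f has_integral I) S \<longleftrightarrow> ((f \<circ> \<psi>) has_integral I) (\<phi> ` S)" for I
    using has_integral_image[OF assms] by blast
  then show ?thesis
    by (metis integrable_integral integrable_on_def integral_unique not_integrable_integral)
qed

end

lemma integral_linear_image_nonneg:
  fixes G :: "real^'k::{finite,wellorder} \<Rightarrow> real^'k::_" and f :: "real^'k::_ \<Rightarrow> real"
  assumes "linear G" and "inj G" and "\<And>x. 0 \<le> f x"
  shows "integral (G ` S) f = \<bar>det (matrix G)\<bar> * integral S (f \<circ> G)"
proof -
  obtain H where "linear H" and HG: "H \<circ> G = id"
    using assms(1,2) linear_injective_left_inverse by blast
  then have H: "H (G x) = x" for x
    by (metis comp_apply id_apply)
  have "((\<lambda>x. \<bar>det (matrix G)\<bar> * f (G x)) has_integral I) S \<longleftrightarrow> (f has_integral I) (G ` S)" for I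
  proof (rule cov_invertible_nonneg_eq[where h = H and g' = "\<lambda>_. G" and h' = "\<lambda>_. H"])
    show "(G has_derivative G) (at x within S)" for x
      using assms(1) by (simp add: linear_imp_has_derivative has_derivative_at_withinI)
    show "(H has_derivative H) (at y within G ` S)" for y
      using \<open>linear H\<close> by (simp add: linear_imp_has_derivative has_derivative_at_withinI)
  qed (auto simp: assms(3) H HG)
  then have "integral (G ` S) f = integral S (\<lambda>x. \<bar>det (matrix G)\<bar> * f (G x))"
    by (metis integrable_integral integrable_on_def integral_unique not_integrable_integral)
  then show ?thesis
    by (simp add: o_def)
qed

lemma integral_linear_image_factor:
  fixes \<phi> :: "'a::euclidean_space \<Rightarrow> real^'k::{finite,wellorder}" and G :: "'a \<Rightarrow> 'a"
  assumes "coordinate_permutation \<phi> \<psi>" and "linear G" and "inj G"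
  obtains c where "c > 0"
    and "\<And>S (f :: 'a \<Rightarrow> real). bounded S \<Longrightarrow> (\<And>x. 0 \<le> f x) \<Longrightarrow>
      integral (G ` S) f = c * integral S (f \<circ> G)"
proof (rule that)
  interpret coordinate_permutation \<phi> \<psi> by fact
  let ?G = "\<phi> \<circ> G \<circ> \<psi>"
  have "linear ?G"
    by (intro linear_compose linear_inverse assms(2) linear)
  have "?G x = ?G y \<Longrightarrow> x = y" for x y
    using assms(3) by (metis comp_apply injD left_inverse right_inverse)
  then have "inj ?G"
    by (rule injI)
  then show "\<bar>det (matrix ?G)\<bar> > 0"
    using det_nz_iff_inj[OF \<open>linear ?G\<close>] by simp
  fix S :: "'a set" and f :: "'a \<Rightarrow> real"
  assume "bounded S" and f: "\<And>x. 0 \<le> f x"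
  then have "bounded (G ` S)"
    using assms(2) bounded_linear_image linear_linear by blast
  then have "integral (G ` S) f = integral (\<phi> ` G ` S) (f \<circ> \<psi>)"
    by (rule integral_image[symmetric])
  also have "\<phi> ` G ` S = ?G ` \<phi> ` S"
    by (simp add: image_comp comp_assoc left_inverse)
  also have "integral (?G ` \<phi> ` S) (f \<circ> \<psi>) = \<bar>det (matrix ?G)\<bar> * integral (\<phi> ` S) (f \<circ> \<psi> \<circ> ?G)"
    using \<open>linear ?G\<close> \<open>inj ?G\<close> by (rule integral_linear_image_nonneg) (simp add: f)
  also have "f \<circ> \<psi> \<circ> ?G = (f \<circ> G) \<circ> \<psi>"
    by (simp add: fun_eq_iff left_inverse)
  also have "integral (\<phi> ` S) ((f \<circ> G) \<circ> \<psi>) = integral S (f \<circ> G)"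
    using \<open>bounded S\<close> by (rule integral_image)
  finally show "integral (G ` S) f = \<bar>det (matrix ?G)\<bar> * integral S (f \<circ> G)" .
qed

text \<open>Index type of the entries of an 'n \<times> 'm matrix; its order is arbitrary and only makes it a
well-order, so that matrices can be flattened into real^('n, 'm) entry.\<close>

typedef ('n, 'm) entry = "UNIV :: ('n \<times> 'm) set"
  by simp

instance entry :: (finite, finite) finite
proof
  have "(UNIV :: ('a, 'b) entry set) = Abs_entry ` UNIV"
    by (rule type_definition.univ[OF type_definition_entry])
  then show "finite (UNIV :: ('a, 'b) entry set)"
    by (metis finite finite_imageI)
qed

instantiation entry :: (finite, finite) linorder
begin

definition less_eq_entry :: "('a, 'b) entry \<Rightarrow> ('a, 'b) entry \<Rightarrow> bool"
  where "x \<le> y \<longleftrightarrow> to_nat (Rep_entry x) \<le> to_nat (Rep_entry y)"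

definition less_entry :: "('a, 'b) entry \<Rightarrow> ('a, 'b) entry \<Rightarrow> bool"
  where "x < y \<longleftrightarrow> to_nat (Rep_entry x) < to_nat (Rep_entry y)"

instance
  by standard (auto simp: less_eq_entry_def less_entry_def Rep_entry_inject)

end

instance entry :: (finite, finite) wellorder
proof
  fix P :: "('a, 'b) entry \<Rightarrow> bool" and a
  assume step: "\<And>x. (\<And>y. y < x \<Longrightarrow> P y) \<Longrightarrow> P x"
  show "P a"
    by (induct a rule: measure_induct_rule[of "\<lambda>x. to_nat (Rep_entry x)"])
      (rule step, simp add: less_entry_def)
qed

definition flatten :: "real^'m^'n \<Rightarrow> real^('n, 'm) entry"
  where "flatten A = (\<chi> k. A $ fst (Rep_entry k) $ snd (Rep_entry k))"

definition unflatten :: "real^('n, 'm) entry \<Rightarrow> real^'m^'n"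
  where "unflatten y = (\<chi> i j. y $ Abs_entry (i, j))"

lemma inner_flatten: "flatten A \<bullet> flatten B = A \<bullet> B"
proof -
  have "flatten A \<bullet> flatten B
      = (\<Sum>k\<in>UNIV. A $ fst (Rep_entry k) $ snd (Rep_entry k) * B $ fst (Rep_entry k) $ snd (Rep_entry k))"
    by (simp add: inner_vec_def flatten_def)
  also have "\<dots> = (\<Sum>ij\<in>UNIV. A $ fst ij $ snd ij * B $ fst ij $ snd ij)"
    by (rule sum.reindex_bij_witness[where j = Rep_entry and i = Abs_entry])
      (simp_all add: Rep_entry_inverse Abs_entry_inverse)
  also have "\<dots> = (\<Sum>i\<in>UNIV. \<Sum>j\<in>UNIV. A $ i $ j * B $ i $ j)"
    by (simp add: sum.cartesian_product case_prod_beta)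
  also have "\<dots> = A \<bullet> B"
    by (simp add: inner_vec_def)
  finally show ?thesis .
qed

lemma flatten_axis: "flatten (axis i (axis j 1)) = axis (Abs_entry (i, j)) 1"
  by (auto simp: flatten_def vec_eq_iff axis_def Abs_entry_inverse Rep_entry_inverse)

lemma flatten_Basis: "flatten ` Basis = Basis"
proof -
  have "flatten ` Basis = (\<Union>i j. {flatten (axis i (axis j 1))})"
    by (auto simp: Basis_vec_def)
  also have "\<dots> = (\<Union>i j. {axis (Abs_entry (i, j)) (1::real)})"
    by (simp add: flatten_axis)
  also have "\<dots> = Basis"
    by (auto simp: Basis_vec_def) (metis Rep_entry_inverse prod.collapse)
  finally show ?thesis .
qed

lemma coordinate_permutation_flatten: "coordinate_permutation flatten unflatten"
proof (rule coordinate_permutation.intro)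
  show "linear flatten"
    by (rule linearI) (simp_all add: flatten_def vec_eq_iff)
  show "unflatten (flatten A) = A" and "flatten (unflatten y) = y" for A y
    by (simp_all add: flatten_def unflatten_def vec_eq_iff Rep_entry_inverse Abs_entry_inverse)
qed (simp_all only: inner_flatten flatten_Basis)

lemma linear_matrix_mult_left: "linear (\<lambda>A. (T::real^'n^'n) ** A)"
  by (rule linearI) (simp_all add: matrix_add_ldistrib matrix_scalar_ac scalar_matrix_assoc)

lemma Gamma_supp_matrix_mult_image:
  fixes T :: "real^'n^'n" and L :: "(real^'m^'n) set"
  assumes "invertible T" and "compact L"
  shows "Gamma_supp Q p ((\<lambda>A. T ** A) ` L) v = Gamma_supp Q p L (v v* T)"
proof -
  obtain T' where T': "T' ** T = mat 1"
    using assms(1) unfolding invertible_def by blast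
  then have inj: "inj (\<lambda>A. T ** A)"
    by (intro inj_on_inverseI[where g = "\<lambda>A. T' ** A"]) (simp add: matrix_mul_assoc)
  obtain c where "c > 0" and cov:
    "\<And>S (f :: real^'m^'n \<Rightarrow> real). bounded S \<Longrightarrow> (\<And>x. 0 \<le> f x) \<Longrightarrow>
      integral ((\<lambda>A. T ** A) ` S) f = c * integral S (f \<circ> (\<lambda>A. T ** A))"
    using integral_linear_image_factor[OF coordinate_permutation_flatten linear_matrix_mult_left inj]
    by blast
  have "bounded L"
    using assms(2) by (rule compact_imp_bounded)
  have "compact ((\<lambda>A. T ** A) ` L)"
    using assms(2) linear_matrix_mult_left
    by (intro compact_continuous_image linear_continuous_on) (simp add: linear_linear)
  then have "measure lebesgue ((\<lambda>A. T ** A) ` L) = c * measure lebesgue L"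
    using assms(2) cov[OF \<open>bounded L\<close>, of "\<lambda>_. 1"]
    by (simp add: lmeasure_integral lmeasurable_compact o_def)
  moreover have "integral ((\<lambda>A. T ** A) ` L) (\<lambda>A. support_fun Q (v v* A) powr p)
      = c * integral L (\<lambda>A. support_fun Q ((v v* T) v* A) powr p)"
    using cov[OF \<open>bounded L\<close>, of "\<lambda>A. support_fun Q (v v* A) powr p"]
    by (simp add: o_def vector_matrix_mul_assoc)
  ultimately show ?thesis
    using \<open>c > 0\<close> by (simp add: Gamma_supp_def)
qed

lemma halfspaces_matrix_image:
  fixes T :: "real^'n^'n" and h :: "real^'n \<Rightarrow> real"
  assumes "invertible T"
  shows "{y. \<forall>v. y \<bullet> v \<le> h (v v* T)} = (\<lambda>z. T *v z) ` {z. \<forall>w. z \<bullet> w \<le> h w}"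
proof (intro set_eqI iffI)
  obtain T' where T': "T ** T' = mat 1" "T' ** T = mat 1"
    using assms unfolding invertible_def by blast
  fix y
  assume y: "y \<in> {y. \<forall>v. y \<bullet> v \<le> h (v v* T)}"
  have "(T' *v y) \<bullet> w = y \<bullet> (w v* T')" for w
    by (metis dot_lmul_matrix inner_commute)
  moreover have "y \<bullet> (w v* T') \<le> h ((w v* T') v* T)" for w
    using y by simp
  ultimately have "(T' *v y) \<bullet> w \<le> h w" for w
    by (simp add: vector_matrix_mul_assoc T')
  moreover have "y = T *v (T' *v y)"
    by (simp add: matrix_vector_mul_assoc T')
  ultimately show "y \<in> (\<lambda>z. T *v z) ` {z. \<forall>w. z \<bullet> w \<le> h w}"
    by blast
next
  fix y
  assume "y \<in> (\<lambda>z. T *v z) ` {z. \<forall>w. z \<bullet> w \<le> h w}"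
  then obtain z where z: "\<forall>w. z \<bullet> w \<le> h w" and y: "y = T *v z"
    by blast
  have "y \<bullet> v = z \<bullet> (v v* T)" for v
    unfolding y by (metis dot_lmul_matrix inner_commute)
  with z show "y \<in> {y. \<forall>v. y \<bullet> v \<le> h (v v* T)}"
    by simp
qed

theorem proposition3p3:
  fixes p :: real and Q :: "(real^'m) set" and T :: "real^'n^'n" and L :: "(real^'m^'n) set"
  assumes "p \<ge> 1"
    and "convex_body Q" and "0 \<in> Q"
    and "invertible T"
    and "compact L" and "measure lebesgue L > 0"
  shows "Gamma Q p ((\<lambda>x. T ** x) ` L) = (\<lambda>y. T *v y) ` Gamma Q p L"
  using halfspaces_matrix_image[OF assms(4)]
  by (simp add: Gamma_def Gamma_supp_matrix_mult_image[OF assms(4,5)])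

end
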